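(* The lattice of subvarieties of the monoid variety $\mathbf M(xyx)\vee\mathbf M_\gamma(xx^+yy^+)$ is not modular.
   Context: Words are elements of the free monoid $\mathfrak X^\ast$ over a countably infinite alphabet. For a set $W$ of words, $M(W)$ is the Rees quotient of $\mathfrak X^\ast$ by the ideal of all words that are not factors of any word in $W$; $\mathbf M(xyx)$ is the monoid variety generated by $M(\{xyx\})$. A letter is simple in a word if it occurs exactly once. The congruence $\gamma$: $\mathbf u\mathrel\gamma\mathbf v$ iff $\mathbf u,\mathbf v$ have the same simple letters and $\mathbf u$ is obtained from $\mathbf v$ by changing individual exponents of letters ($\mathbf u=x_1^{e_1}\cdots x_r^{e_r}$, $\mathbf v=x_1^{f_1}\cdots x_r^{f_r}$, $e_i,f_i\ge1$). For $\gamma$-classes, $\mathtt v\le\mathtt u$ if $\mathtt u=\mathtt p\mathtt v\mathtt s$ for $\gamma$-classes $\mathtt p,\mathtt s$; for a set $\mathtt W$ of $\gamma$-classes, $M_\gamma(\mathtt W)$ is the Rees quotient of $\mathfrak X^\ast/\gamma$ by the ideal of $\gamma$-classes not $\le$ any member of $\mathtt W$. $xx^+yy^+$ is the $\gamma$-class of $x^2y^2$, and $\mathbf M_\gamma(xx^+yy^+)$ is the monoid variety generated by $M_\gamma(\{xx^+yy^+\})$. $\vee$ denotes join of varieties. *)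

theory Defs
  imports Main
begin

type_synonym word = "nat list"

definition factor :: "word \<Rightarrow> word \<Rightarrow> bool" where
  "factor v u \<longleftrightarrow> (\<exists>p s. u = p @ v @ s)"

definition subst :: "(nat \<Rightarrow> word) \<Rightarrow> word \<Rightarrow> word" where
  "subst \<sigma> w = concat (map \<sigma> w)"

type_synonym 'a monoid_str = "'a set \<times> ('a \<Rightarrow> 'a \<Rightarrow> 'a) \<times> 'a"

definition eval_word :: "'a monoid_str \<Rightarrow> (nat \<Rightarrow> 'a) \<Rightarrow> word \<Rightarrow> 'a" where
  "eval_word M \<phi> w = foldr (\<lambda>a r. (fst (snd M)) (\<phi> a) r) w (snd (snd M))"

definition sat :: "'a monoid_str \<Rightarrow> word \<Rightarrow> word \<Rightarrow> bool" where
  "sat M u v \<longleftrightarrow> (\<forall>\<phi>. (\<forall>i. \<phi> i \<in> fst M) \<longrightarrow> eval_word M \<phi> u = eval_word M \<phi> v)"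

definition identities :: "'a monoid_str \<Rightarrow> (word \<times> word) set" where
  "identities M = {(u, v). sat M u v}"

text \<open>Rees quotient M(W): factors of words in W, plus zero (None).\<close>
definition M_words :: "word set \<Rightarrow> word option monoid_str" where
  "M_words W =
    ({None} \<union> Some ` {w. \<exists>u\<in>W. factor w u},
     (\<lambda>a b. case (a, b) of
        (Some u, Some v) \<Rightarrow> (if \<exists>w\<in>W. factor (u @ v) w then Some (u @ v) else None)
      | _ \<Rightarrow> None),
     Some [])"

definition simple_letters :: "word \<Rightarrow> nat set" where
  "simple_letters w = {x. count_list w x = 1}"

definition gamma :: "word \<Rightarrow> word \<Rightarrow> bool" where
  "gamma u v \<longleftrightarrow> simple_letters u = simple_letters v \<and>
     (\<exists>xs es fs. length es = length xs \<and> length fs = length xs \<and>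
        (\<forall>e\<in>set es. 1 \<le> e) \<and> (\<forall>f\<in>set fs. 1 \<le> f) \<and>
        u = concat (map (\<lambda>(e, x). replicate e x) (zip es xs)) \<and>
        v = concat (map (\<lambda>(f, x). replicate f x) (zip fs xs)))"

definition gclass :: "word \<Rightarrow> word set" where
  "gclass w = {v. gamma w v}"

definition gle :: "word \<Rightarrow> word \<Rightarrow> bool" where
  "gle v u \<longleftrightarrow> (\<exists>p s. gclass u = gclass (p @ v @ s))"

text \<open>Rees quotient M_gamma(W) of the free monoid modulo gamma, W given by
  representatives of the gamma-classes; elements are gamma-classes (Some) and zero (None).\<close>
definition M_gamma :: "word set \<Rightarrow> word set option monoid_str" where
  "M_gamma W =
    ({None} \<union> Some ` {gclass w | w. \<exists>u\<in>W. gle w u},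
     (\<lambda>a b. case (a, b) of
        (Some A, Some B) \<Rightarrow>
          (let w = (SOME x. x \<in> A) @ (SOME y. y \<in> B) in
           if \<exists>u\<in>W. gle w u then Some (gclass w) else None)
      | _ \<Rightarrow> None),
     Some (gclass []))"

text \<open>By Birkhoff, subvarieties of a monoid variety V correspond to equational theories
  containing the identities of V, with the order reversed.\<close>
definition eq_theory :: "(word \<times> word) set \<Rightarrow> bool" where
  "eq_theory T \<longleftrightarrow> equiv UNIV T \<and>
     (\<forall>u v p s. (u, v) \<in> T \<longrightarrow> (p @ u @ s, p @ v @ s) \<in> T) \<and>
     (\<forall>u v \<sigma>. (u, v) \<in> T \<longrightarrow> (subst \<sigma> u, subst \<sigma> v) \<in> T)"

definition subvarieties :: "(word \<times> word) set \<Rightarrow> (word \<times> word) set set" where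
  "subvarieties IdV = {T. eq_theory T \<and> IdV \<subseteq> T}"

definition var_le :: "(word \<times> word) set \<Rightarrow> (word \<times> word) set \<Rightarrow> bool" where
  "var_le T1 T2 \<longleftrightarrow> T2 \<subseteq> T1"

definition is_lub_in :: "'a set \<Rightarrow> ('a \<Rightarrow> 'a \<Rightarrow> bool) \<Rightarrow> 'a \<Rightarrow> 'a \<Rightarrow> 'a \<Rightarrow> bool" where
  "is_lub_in L le a b s \<longleftrightarrow> s \<in> L \<and> le a s \<and> le b s \<and> (\<forall>z\<in>L. le a z \<and> le b z \<longrightarrow> le s z)"

definition is_glb_in :: "'a set \<Rightarrow> ('a \<Rightarrow> 'a \<Rightarrow> bool) \<Rightarrow> 'a \<Rightarrow> 'a \<Rightarrow> 'a \<Rightarrow> bool" where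
  "is_glb_in L le a b m \<longleftrightarrow> m \<in> L \<and> le m a \<and> le m b \<and> (\<forall>z\<in>L. le z a \<and> le z b \<longrightarrow> le z m)"

definition modular_on :: "'a set \<Rightarrow> ('a \<Rightarrow> 'a \<Rightarrow> bool) \<Rightarrow> bool" where
  "modular_on L le \<longleftrightarrow> (\<forall>a\<in>L. \<forall>b\<in>L. \<forall>c\<in>L. le a c \<longrightarrow>
     (\<forall>m j j' m'. is_glb_in L le b c m \<and> is_lub_in L le a m j \<and>
        is_lub_in L le a b j' \<and> is_glb_in L le j' c m' \<longrightarrow> j = m'))"

text \<open>x = letter 0, y = letter 1.\<close>
definition M_xyx :: "word option monoid_str" where
  "M_xyx = M_words {[0, 1, 0]}"

definition M_gamma_xxyy :: "word set option monoid_str" where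
  "M_gamma_xxyy = M_gamma {[0, 0, 1, 1]}"

definition Id_join :: "(word \<times> word) set" where
  "Id_join = identities M_xyx \<inter> identities M_gamma_xxyy"

end

theory Submission
  imports Defs
begin

text \<open>
  Subvarieties are represented by their equational theories, so joins become intersections and
  meets become generated equational theories. Let \<open>a\<close> be the variety of \<open>M(xyx)\<close>, \<open>b\<close> that of
  the ten-element monoid \<open>M_xy_trunc\<close>, a homomorphic image of \<open>M\<^sub>\<gamma>(xx\<^sup>+yy\<^sup>+)\<close> (in fact
  isomorphic to it), and \<open>c = a \<or> var N\<close>, where \<open>N\<close> is a Rees quotient of a submonoid of
  \<open>M(xyx) \<times> M_xy_trunc\<close>; thus \<open>a \<le> c\<close> and \<open>N \<in> a \<or> b\<close>.
  The identity \<open>xyxz\<^sup>2 \<approx> xyzxz\<close> holds in \<open>M(xyx)\<close> and is derivable from identities of \<open>b\<close>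
  and of \<open>c\<close>, so it holds in \<open>a \<or> (b \<and> c)\<close>. But \<open>(a \<or> b) \<and> c \<subseteq> var N\<close>, and \<open>N\<close> violates it.
\<close>

definition mult_of :: "'a monoid_str \<Rightarrow> 'a \<Rightarrow> 'a \<Rightarrow> 'a" where
  "mult_of M = fst (snd M)"

definition one_of :: "'a monoid_str \<Rightarrow> 'a" where
  "one_of M = snd (snd M)"

definition is_monoid :: "'a monoid_str \<Rightarrow> bool" where
  "is_monoid M \<longleftrightarrow> one_of M \<in> fst M \<and>
    (\<forall>a\<in>fst M. \<forall>b\<in>fst M. mult_of M a b \<in> fst M) \<and>
    (\<forall>a\<in>fst M. \<forall>b\<in>fst M. \<forall>c\<in>fst M. mult_of M (mult_of M a b) c = mult_of M a (mult_of M b c)) \<and>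
    (\<forall>a\<in>fst M. mult_of M (one_of M) a = a \<and> mult_of M a (one_of M) = a)"

lemma eval_word_Nil [simp]: "eval_word M \<phi> [] = one_of M"
  by (simp add: eval_word_def one_of_def)

lemma eval_word_Cons [simp]: "eval_word M \<phi> (a # u) = mult_of M (\<phi> a) (eval_word M \<phi> u)"
  by (simp add: eval_word_def mult_of_def)

lemma eval_word_cong: "(\<And>i. i \<in> set u \<Longrightarrow> \<phi> i = \<psi> i) \<Longrightarrow> eval_word M \<phi> u = eval_word M \<psi> u"
  by (induction u) auto

context
  fixes M :: "'a monoid_str" and \<phi> :: "nat \<Rightarrow> 'a"
  assumes monoid: "is_monoid M" and valuation: "\<forall>i. \<phi> i \<in> fst M"
begin

lemma eval_word_closed: "eval_word M \<phi> u \<in> fst M"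
  using monoid valuation by (induction u) (auto simp: is_monoid_def)

lemma eval_word_append: "eval_word M \<phi> (u @ v) = mult_of M (eval_word M \<phi> u) (eval_word M \<phi> v)"
  using monoid valuation eval_word_closed by (induction u) (auto simp: is_monoid_def)

lemma eval_word_subst: "eval_word M \<phi> (subst \<sigma> u) = eval_word M (\<lambda>i. eval_word M \<phi> (\<sigma> i)) u"
  by (induction u) (simp_all add: subst_def eval_word_append)

end

lemma eq_theory_identities:
  assumes "is_monoid M"
  shows "eq_theory (identities M)"
proof -
  have "equiv UNIV (identities M)"
    by (auto simp: equiv_def refl_on_def sym_def trans_def identities_def sat_def)
  moreover have "(p @ u @ s, p @ v @ s) \<in> identities M" if "(u, v) \<in> identities M" for u v p s
    using that by (auto simp: identities_def sat_def eval_word_append[OF assms])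
  moreover have "(subst \<sigma> u, subst \<sigma> v) \<in> identities M" if "(u, v) \<in> identities M" for u v \<sigma>
    using that eval_word_closed[OF assms]
    by (auto simp: identities_def sat_def eval_word_subst[OF assms])
  ultimately show ?thesis
    unfolding eq_theory_def by blast
qed

lemma sat_hom_image:
  assumes one: "one_of M \<in> fst M" and closed: "\<forall>a\<in>fst M. \<forall>b\<in>fst M. mult_of M a b \<in> fst M"
    and hom: "\<forall>a\<in>fst M. \<forall>b\<in>fst M. h (mult_of M a b) = mult_of M' (h a) (h b)"
    and hom_one: "h (one_of M) = one_of M'"
    and onto: "\<forall>b\<in>fst M'. \<exists>a\<in>fst M. h a = b"
    and "sat M u v"
  shows "sat M' u v"
  unfolding sat_def
proof (intro allI impI)
  fix \<phi>' :: "nat \<Rightarrow> _"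
  assume "\<forall>i. \<phi>' i \<in> fst M'"
  then have "\<forall>i. \<exists>a. a \<in> fst M \<and> h a = \<phi>' i"
    using onto by blast
  then obtain \<phi> where \<phi>: "\<forall>i. \<phi> i \<in> fst M \<and> h (\<phi> i) = \<phi>' i"
    by (rule choice[THEN exE])
  have eval: "eval_word M \<phi> w \<in> fst M \<and> h (eval_word M \<phi> w) = eval_word M' \<phi>' w" for w
  proof (induction w)
    case Nil
    show ?case using one hom_one by simp
  next
    case (Cons a w)
    then show ?case using closed hom \<phi> by simp
  qed
  have "eval_word M \<phi> u = eval_word M \<phi> v"
    using \<open>sat M u v\<close> \<phi> unfolding sat_def by blast
  then show "eval_word M' \<phi>' u = eval_word M' \<phi>' v"
    using eval by metis
qed

lemma sat_three_letters:
  assumes letters: "set u \<union> set v \<subseteq> {0, 1, 2}"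
    and "\<forall>a\<in>fst M. \<forall>b\<in>fst M. \<forall>c\<in>fst M.
      eval_word M (\<lambda>i. if i = 0 then a else if i = 1 then b else c) u =
      eval_word M (\<lambda>i. if i = 0 then a else if i = 1 then b else c) v"
  shows "sat M u v"
  unfolding sat_def
proof (intro allI impI)
  fix \<phi> :: "nat \<Rightarrow> _"
  assume "\<forall>i. \<phi> i \<in> fst M"
  moreover have "eval_word M \<phi> w = eval_word M (\<lambda>i. if i = 0 then \<phi> 0 else if i = 1 then \<phi> 1 else \<phi> 2) w"
    if "w \<in> {u, v}" for w
    using that letters by (intro eval_word_cong) auto
  ultimately show "eval_word M \<phi> u = eval_word M \<phi> v"
    using assms(2) by simp
qed

lemma sat_two_letters:
  assumes letters: "set u \<union> set v \<subseteq> {0, 1}"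
    and "\<forall>a\<in>fst M. \<forall>b\<in>fst M.
      eval_word M (\<lambda>i. if i = 0 then a else b) u = eval_word M (\<lambda>i. if i = 0 then a else b) v"
  shows "sat M u v"
proof (rule sat_three_letters)
  show "set u \<union> set v \<subseteq> {0, 1, 2}"
    using letters by auto
  have "eval_word M (\<lambda>i. if i = 0 then a else if i = 1 then b else c) w =
        eval_word M (\<lambda>i. if i = 0 then a else b) w" if "w \<in> {u, v}" for w a b c
    using that letters by (intro eval_word_cong) auto
  then show "\<forall>a\<in>fst M. \<forall>b\<in>fst M. \<forall>c\<in>fst M.
      eval_word M (\<lambda>i. if i = 0 then a else if i = 1 then b else c) u =
      eval_word M (\<lambda>i. if i = 0 then a else if i = 1 then b else c) v"
    using assms(2) by simp
qed

section \<open>Equational theories and the lattice of subvarieties\<close>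

lemma eq_theory_trans: "eq_theory T \<Longrightarrow> (u, v) \<in> T \<Longrightarrow> (v, w) \<in> T \<Longrightarrow> (u, w) \<in> T"
  unfolding eq_theory_def equiv_def by (meson transD)

lemma eq_theory_context: "eq_theory T \<Longrightarrow> (u, v) \<in> T \<Longrightarrow> (p @ u @ s, p @ v @ s) \<in> T"
  unfolding eq_theory_def by blast

lemma eq_theory_subst: "eq_theory T \<Longrightarrow> (u, v) \<in> T \<Longrightarrow> (subst \<sigma> u, subst \<sigma> v) \<in> T"
  unfolding eq_theory_def by blast

lemma eq_theory_Inter:
  assumes "\<And>T. T \<in> F \<Longrightarrow> eq_theory T"
  shows "eq_theory (\<Inter>F)"
proof -
  have "equiv UNIV T" if "T \<in> F" for T
    using assms[OF that] by (simp add: eq_theory_def)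
  then have "equiv UNIV (\<Inter>F)"
    using sym_INTER[of F id] trans_INTER[of F id]
    by (intro equivI) (auto simp: equiv_def refl_on_def)
  moreover have "(p @ u @ s, p @ v @ s) \<in> \<Inter>F" if "(u, v) \<in> \<Inter>F" for u v p s
    using that by (auto intro: eq_theory_context assms)
  moreover have "(subst \<sigma> u, subst \<sigma> v) \<in> \<Inter>F" if "(u, v) \<in> \<Inter>F" for u v \<sigma>
    using that by (auto intro: eq_theory_subst assms)
  ultimately show ?thesis
    unfolding eq_theory_def by blast
qed

lemma eq_theory_Int: "eq_theory A \<Longrightarrow> eq_theory B \<Longrightarrow> eq_theory (A \<inter> B)"
  using eq_theory_Inter[of "{A, B}"] by auto

definition eq_closure :: "(word \<times> word) set \<Rightarrow> (word \<times> word) set" where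
  "eq_closure S = \<Inter>{T. eq_theory T \<and> S \<subseteq> T}"

lemma eq_theory_eq_closure: "eq_theory (eq_closure S)"
  unfolding eq_closure_def by (rule eq_theory_Inter) auto

lemma eq_closure_upper: "S \<subseteq> eq_closure S"
  unfolding eq_closure_def by auto

lemma eq_closure_least: "eq_theory T \<Longrightarrow> S \<subseteq> T \<Longrightarrow> eq_closure S \<subseteq> T"
  unfolding eq_closure_def by auto

lemma identities_in_subvarieties: "is_monoid M \<Longrightarrow> I \<subseteq> identities M \<Longrightarrow> identities M \<in> subvarieties I"
  by (simp add: subvarieties_def eq_theory_identities)

lemma is_lub_in_subvarieties:
  assumes "A \<in> subvarieties I" "B \<in> subvarieties I"
  shows "is_lub_in (subvarieties I) var_le A B (A \<inter> B)"
  using assms eq_theory_Int by (auto simp: is_lub_in_def var_le_def subvarieties_def)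

lemma is_glb_in_subvarieties:
  assumes "A \<in> subvarieties I" "B \<in> subvarieties I"
  shows "is_glb_in (subvarieties I) var_le A B (eq_closure (A \<union> B))"
proof -
  have "eq_closure (A \<union> B) \<in> subvarieties I"
    using assms eq_closure_upper[of "A \<union> B"] eq_theory_eq_closure
    unfolding subvarieties_def by blast
  moreover have "eq_closure (A \<union> B) \<subseteq> T" if "T \<in> subvarieties I" "A \<subseteq> T" "B \<subseteq> T" for T
    using that eq_closure_least[of T "A \<union> B"] unfolding subvarieties_def by blast
  ultimately show ?thesis
    using eq_closure_upper[of "A \<union> B"] unfolding is_glb_in_def var_le_def by blast
qed

lemma not_modular_on_subvarieties:
  assumes A: "A \<in> subvarieties I" and B: "B \<in> subvarieties I" and C: "C \<in> subvarieties I"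
    and "C \<subseteq> A"
    and "(u, v) \<in> A" "(u, v) \<in> eq_closure (B \<union> C)" "(u, v) \<notin> eq_closure (A \<inter> B \<union> C)"
  shows "\<not> modular_on (subvarieties I) var_le"
proof
  assume modular: "modular_on (subvarieties I) var_le"
  let ?m = "eq_closure (B \<union> C)"
  have glb: "is_glb_in (subvarieties I) var_le B C ?m"
    using B C by (rule is_glb_in_subvarieties)
  have lub': "is_lub_in (subvarieties I) var_le A B (A \<inter> B)"
    using A B by (rule is_lub_in_subvarieties)
  have lub: "is_lub_in (subvarieties I) var_le A ?m (A \<inter> ?m)"
    using A glb by (intro is_lub_in_subvarieties) (simp_all add: is_glb_in_def)
  have glb': "is_glb_in (subvarieties I) var_le (A \<inter> B) C (eq_closure (A \<inter> B \<union> C))"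
    using lub' C by (intro is_glb_in_subvarieties) (simp_all add: is_lub_in_def)
  have "var_le A C"
    using \<open>C \<subseteq> A\<close> by (simp add: var_le_def)
  then have "\<forall>m j j' m'. is_glb_in (subvarieties I) var_le B C m \<and> is_lub_in (subvarieties I) var_le A m j \<and>
      is_lub_in (subvarieties I) var_le A B j' \<and> is_glb_in (subvarieties I) var_le j' C m' \<longrightarrow> j = m'"
    using modular A B C unfolding modular_on_def by blast
  then have "A \<inter> ?m = eq_closure (A \<inter> B \<union> C)"
    using glb lub lub' glb' by blast
  then show False
    using assms(5-7) by blast
qed

section \<open>Rees quotients of submonoids of products\<close>

definition zero_collapse :: "'a option \<times> 'b option \<Rightarrow> 'a option \<times> 'b option" where
  "zero_collapse p = (if fst p = None \<or> snd p = None then (None, None) else p)"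

lemma zero_collapse_simps:
  "zero_collapse (None, b) = (None, None)"
  "zero_collapse (a, None) = (None, None)"
  "zero_collapse (Some x, Some y) = (Some x, Some y)"
  by (simp_all add: zero_collapse_def)

definition None_is_zero :: "'a option monoid_str \<Rightarrow> bool" where
  "None_is_zero M \<longleftrightarrow> (\<forall>x. mult_of M None x = None \<and> mult_of M x None = None)"

text \<open>
  When \<open>C\<close> is closed under the collapsed product, \<open>zero_prod M\<^sub>1 M\<^sub>2 C\<close> is the Rees quotient
  of the submonoid \<open>C\<close> of \<open>M\<^sub>1 \<times> M\<^sub>2\<close> by its pairs with a zero coordinate, all of which are
  identified with \<open>(None, None)\<close>.
\<close>

definition zero_prod :: "'a option monoid_str \<Rightarrow> 'b option monoid_str \<Rightarrow> ('a option \<times> 'b option) set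
    \<Rightarrow> ('a option \<times> 'b option) monoid_str" where
  "zero_prod M\<^sub>1 M\<^sub>2 C =
    (C, (\<lambda>a b. zero_collapse (mult_of M\<^sub>1 (fst a) (fst b), mult_of M\<^sub>2 (snd a) (snd b))), (one_of M\<^sub>1, one_of M\<^sub>2))"

lemma zero_prod_simps:
  "fst (zero_prod M\<^sub>1 M\<^sub>2 C) = C"
  "mult_of (zero_prod M\<^sub>1 M\<^sub>2 C) a b = zero_collapse (mult_of M\<^sub>1 (fst a) (fst b), mult_of M\<^sub>2 (snd a) (snd b))"
  "one_of (zero_prod M\<^sub>1 M\<^sub>2 C) = (one_of M\<^sub>1, one_of M\<^sub>2)"
  by (simp_all add: zero_prod_def mult_of_def one_of_def)

context
  fixes M\<^sub>1 :: "'a option monoid_str" and M\<^sub>2 :: "'b option monoid_str"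
  assumes zero: "None_is_zero M\<^sub>1" "None_is_zero M\<^sub>2"
begin

lemma zero_collapse_mult:
  "zero_collapse (mult_of M\<^sub>1 (fst (zero_collapse p)) x, mult_of M\<^sub>2 (snd (zero_collapse p)) y) =
   zero_collapse (mult_of M\<^sub>1 (fst p) x, mult_of M\<^sub>2 (snd p) y)"
  "zero_collapse (mult_of M\<^sub>1 x (fst (zero_collapse p)), mult_of M\<^sub>2 y (snd (zero_collapse p))) =
   zero_collapse (mult_of M\<^sub>1 x (fst p), mult_of M\<^sub>2 y (snd p))"
  using zero unfolding zero_collapse_def None_is_zero_def by (cases p; auto)+

lemma eval_word_zero_prod:
  assumes "one_of M\<^sub>1 \<noteq> None" "one_of M\<^sub>2 \<noteq> None"
  shows "eval_word (zero_prod M\<^sub>1 M\<^sub>2 C) \<phi> w =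
    zero_collapse (eval_word M\<^sub>1 (fst \<circ> \<phi>) w, eval_word M\<^sub>2 (snd \<circ> \<phi>) w)"
proof (induction w)
  case Nil
  show ?case using assms by (auto simp: zero_prod_simps zero_collapse_def)
next
  case (Cons a w)
  show ?case by (simp add: Cons zero_prod_simps zero_collapse_mult)
qed

lemma sat_zero_prod:
  assumes "one_of M\<^sub>1 \<noteq> None" "one_of M\<^sub>2 \<noteq> None" and "C \<subseteq> fst M\<^sub>1 \<times> fst M\<^sub>2"
    and "sat M\<^sub>1 u v" "sat M\<^sub>2 u v"
  shows "sat (zero_prod M\<^sub>1 M\<^sub>2 C) u v"
  unfolding sat_def
proof (intro allI impI)
  fix \<phi> :: "nat \<Rightarrow> _"
  assume "\<forall>i. \<phi> i \<in> fst (zero_prod M\<^sub>1 M\<^sub>2 C)"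
  then have "\<phi> i \<in> fst M\<^sub>1 \<times> fst M\<^sub>2" for i
    using \<open>C \<subseteq> fst M\<^sub>1 \<times> fst M\<^sub>2\<close> by (auto simp: zero_prod_simps)
  then have "\<forall>i. (fst \<circ> \<phi>) i \<in> fst M\<^sub>1" "\<forall>i. (snd \<circ> \<phi>) i \<in> fst M\<^sub>2"
    by (simp_all add: mem_Times_iff)
  then show "eval_word (zero_prod M\<^sub>1 M\<^sub>2 C) \<phi> u = eval_word (zero_prod M\<^sub>1 M\<^sub>2 C) \<phi> v"
    using \<open>sat M\<^sub>1 u v\<close> \<open>sat M\<^sub>2 u v\<close> unfolding eval_word_zero_prod[OF assms(1,2)] sat_def by simp
qed

lemma is_monoid_zero_prod:
  assumes monoids: "is_monoid M\<^sub>1" "is_monoid M\<^sub>2" and C: "C \<subseteq> fst M\<^sub>1 \<times> fst M\<^sub>2"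
    and one: "(one_of M\<^sub>1, one_of M\<^sub>2) \<in> C"
    and closed: "\<forall>a\<in>C. \<forall>b\<in>C. zero_collapse (mult_of M\<^sub>1 (fst a) (fst b), mult_of M\<^sub>2 (snd a) (snd b)) \<in> C"
    and collapsed: "\<forall>a\<in>C. zero_collapse a = a"
  shows "is_monoid (zero_prod M\<^sub>1 M\<^sub>2 C)"
proof -
  let ?M = "zero_prod M\<^sub>1 M\<^sub>2 C"
  have assoc: "mult_of ?M (mult_of ?M a b) c = mult_of ?M a (mult_of ?M b c)"
    if "a \<in> C" "b \<in> C" "c \<in> C" for a b c
  proof -
    have "fst a \<in> fst M\<^sub>1" "fst b \<in> fst M\<^sub>1" "fst c \<in> fst M\<^sub>1"
      "snd a \<in> fst M\<^sub>2" "snd b \<in> fst M\<^sub>2" "snd c \<in> fst M\<^sub>2"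
      using that C by auto
    with monoids show ?thesis
      unfolding zero_prod_simps zero_collapse_mult is_monoid_def by simp
  qed
  have unit: "mult_of ?M (one_of ?M) a = a \<and> mult_of ?M a (one_of ?M) = a" if "a \<in> C" for a
  proof -
    have "fst a \<in> fst M\<^sub>1" "snd a \<in> fst M\<^sub>2"
      using that C by auto
    with monoids collapsed that show ?thesis
      unfolding zero_prod_simps is_monoid_def by simp
  qed
  show ?thesis
    unfolding is_monoid_def using one closed assoc unit by (simp add: zero_prod_simps)
qed

end

section \<open>The monoid \<open>M(xyx)\<close>\<close>

lemma factor_Nil: "factor [] w"
  unfolding factor_def by auto

lemma factor_appendD: "factor (u @ v) w \<Longrightarrow> factor u w \<and> factor v w"
  unfolding factor_def by (metis append.assoc)

lemma is_monoid_M_words: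
  assumes "W \<noteq> {}"
  shows "is_monoid (M_words W)"
proof -
  let ?M = "M_words W"
  have word_mult: "mult_of ?M (Some u) (Some v) = (if \<exists>x\<in>W. factor (u @ v) x then Some (u @ v) else None)"
    for u v
    by (simp add: M_words_def mult_of_def)
  have zero: "mult_of ?M None a = None" "mult_of ?M a None = None" for a
    by (simp_all add: M_words_def mult_of_def split: option.splits)
  have left: "mult_of ?M (mult_of ?M (Some u) (Some v)) (Some w) =
      (if \<exists>x\<in>W. factor (u @ v @ w) x then Some (u @ v @ w) else None)" for u v w
    using factor_appendD[of "u @ v" w] by (auto simp: word_mult zero)
  have right: "mult_of ?M (Some u) (mult_of ?M (Some v) (Some w)) =
      (if \<exists>x\<in>W. factor (u @ v @ w) x then Some (u @ v @ w) else None)" for u v w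
    using factor_appendD[of u "v @ w"] by (auto simp: word_mult zero)
  have "mult_of ?M (mult_of ?M a b) c = mult_of ?M a (mult_of ?M b c)" for a b c
  proof (cases "a = None \<or> b = None \<or> c = None")
    case True
    then show ?thesis by (auto simp: zero)
  next
    case False
    then obtain u v w where "a = Some u" "b = Some v" "c = Some w" by auto
    then show ?thesis by (simp only: left right)
  qed
  moreover have "one_of ?M \<in> fst ?M"
    using assms factor_Nil by (auto simp: M_words_def one_of_def)
  moreover have "\<forall>a\<in>fst ?M. \<forall>b\<in>fst ?M. mult_of ?M a b \<in> fst ?M"
    by (auto simp: M_words_def mult_of_def split: option.splits)
  moreover have "\<forall>a\<in>fst ?M. mult_of ?M (one_of ?M) a = a \<and> mult_of ?M a (one_of ?M) = a"
    by (auto simp: M_words_def mult_of_def one_of_def split: option.splits)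
  ultimately show ?thesis
    unfolding is_monoid_def by blast
qed

lemma factor_xyx_iff: "factor w [0, 1, 0] \<longleftrightarrow> w \<in> {[], [0], [1], [0, 1], [1, 0], [0, 1, 0]}"
proof
  assume "factor w [0, 1, 0]"
  then obtain p s where "[0, 1, 0] = p @ w @ s"
    unfolding factor_def by blast
  then show "w \<in> {[], [0], [1], [0, 1], [1, 0], [0, 1, 0]}"
    by (auto simp: Cons_eq_append_conv append_eq_Cons_conv)
next
  have "[0, 1, 0] = [] @ [0, 1, 0] @ []" "[0, 1, 0] = [] @ [0, 1] @ [0]" "[0, 1, 0] = [0] @ [1, 0] @ []"
    "[0, 1, 0] = [0] @ [1] @ [0]" "[0, 1, 0] = [] @ [0] @ [1, 0]" "[0, 1, 0] = [] @ [] @ [0, 1, 0::nat]"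
    by simp_all
  then show "w \<in> {[], [0], [1], [0, 1], [1, 0], [0, 1, 0]} \<Longrightarrow> factor w [0, 1, 0]"
    unfolding factor_def by blast
qed

lemma M_xyx_simps:
  "fst M_xyx = {None, Some [], Some [0], Some [1], Some [0, 1], Some [1, 0], Some [0, 1, 0]}"
  "mult_of M_xyx a b = (case (a, b) of
     (Some u, Some v) \<Rightarrow> if u @ v \<in> {[], [0], [1], [0, 1], [1, 0], [0, 1, 0]} then Some (u @ v) else None
   | _ \<Rightarrow> None)"
  "one_of M_xyx = Some []"
  unfolding M_xyx_def M_words_def mult_of_def one_of_def using factor_xyx_iff
  by (auto split: option.splits)

lemma is_monoid_M_xyx: "is_monoid M_xyx"
  unfolding M_xyx_def by (rule is_monoid_M_words) simp

lemma None_is_zero_M_xyx: "None_is_zero M_xyx"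
  unfolding None_is_zero_def M_xyx_simps by (auto split: option.splits)

section \<open>The monoid \<open>M\<^sub>\<gamma>(xx\<^sup>+yy\<^sup>+)\<close>\<close>

text \<open>
  A concrete copy of \<open>M\<^sub>\<gamma>(xx\<^sup>+yy\<^sup>+)\<close>: \<open>Some (i, j)\<close> stands for the \<open>\<gamma>\<close>-class of
  \<open>x\<^sup>iy\<^sup>j\<close>, where an exponent \<open>2\<close> stands for every exponent \<open>\<ge> 2\<close>.
\<close>

definition M_xy_trunc :: "(nat \<times> nat) option monoid_str" where
  "M_xy_trunc =
    ({None} \<union> Some ` ({0, 1, 2} \<times> {0, 1, 2}),
     (\<lambda>a b. case (a, b) of
        (Some (i, j), Some (k, l)) \<Rightarrow>
          if j = 0 \<or> k = 0 then Some (min 2 (i + k), min 2 (j + l)) else None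
      | _ \<Rightarrow> None),
     Some (0, 0))"

lemma M_xy_trunc_simps:
  "fst M_xy_trunc = {None, Some (0, 0), Some (0, 1), Some (0, 2), Some (1, 0), Some (1, 1), Some (1, 2),
     Some (2, 0), Some (2, 1), Some (2, 2)}"
  "mult_of M_xy_trunc a b = (case (a, b) of
     (Some (i, j), Some (k, l)) \<Rightarrow> if j = 0 \<or> k = 0 then Some (min 2 (i + k), min 2 (j + l)) else None
   | _ \<Rightarrow> None)"
  "one_of M_xy_trunc = Some (0, 0)"
  unfolding M_xy_trunc_def mult_of_def one_of_def by auto

lemma is_monoid_M_xy_trunc: "is_monoid M_xy_trunc"
  unfolding is_monoid_def M_xy_trunc_simps by simp

lemma None_is_zero_M_xy_trunc: "None_is_zero M_xy_trunc"
  unfolding None_is_zero_def M_xy_trunc_simps by (auto split: option.splits)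

definition blocks :: "nat list \<Rightarrow> word \<Rightarrow> word" where
  "blocks es xs = concat (map (\<lambda>(e, x). replicate e x) (zip es xs))"

lemma blocks_Cons: "blocks (e # es) (x # xs) = replicate e x @ blocks es xs"
  by (simp add: blocks_def)

lemma set_blocks:
  "length es = length xs \<Longrightarrow> \<forall>e\<in>set es. 1 \<le> e \<Longrightarrow> set (blocks es xs) = set xs"
proof (induction xs arbitrary: es)
  case Nil
  then show ?case by (simp add: blocks_def)
next
  case (Cons x xs)
  then obtain e es' where "es = e # es'"
    by (cases es) auto
  with Cons show ?case
    by (auto simp: blocks_Cons)
qed

lemma sorted_blocks:
  "length es = length xs \<Longrightarrow> \<forall>e\<in>set es. 1 \<le> e \<Longrightarrow> sorted (blocks es xs) = sorted xs"
proof (induction xs arbitrary: es)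
  case Nil
  then show ?case by (simp add: blocks_def)
next
  case (Cons x xs)
  then obtain e es' where es: "es = e # es'" and "1 \<le> e"
    by (cases es) auto
  with Cons.prems have "sorted (blocks es' xs) = sorted xs" "set (blocks es' xs) = set xs"
    by (simp_all add: Cons.IH set_blocks)
  with \<open>1 \<le> e\<close> show ?case
    by (auto simp: es blocks_Cons sorted_append)
qed

lemma gamma_iff_blocks:
  "gamma u v \<longleftrightarrow> simple_letters u = simple_letters v \<and>
    (\<exists>xs es fs. length es = length xs \<and> length fs = length xs \<and>
      (\<forall>e\<in>set es. 1 \<le> e) \<and> (\<forall>f\<in>set fs. 1 \<le> f) \<and> u = blocks es xs \<and> v = blocks fs xs)"
  by (simp add: gamma_def blocks_def)

lemma gamma_blocksE:
  assumes "gamma u v"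
  obtains xs es fs where "length es = length xs" "length fs = length xs"
    "\<forall>e\<in>set es. 1 \<le> e" "\<forall>f\<in>set fs. 1 \<le> f" "u = blocks es xs" "v = blocks fs xs"
  using assms unfolding gamma_iff_blocks by blast

lemma gamma_refl: "gamma u u"
proof -
  have "blocks (replicate (length u) 1) u = u"
    by (induction u) (simp_all add: blocks_Cons, simp add: blocks_def)
  then show ?thesis
    unfolding gamma_iff_blocks by (metis in_set_replicate length_replicate order_refl)
qed

lemma set_eq_if_gamma: "gamma u v \<Longrightarrow> set u = set v"
  by (elim gamma_blocksE) (simp add: set_blocks)

lemma min2_eq_iff: "min 2 a = min 2 (b :: nat) \<longleftrightarrow> (a = 0 \<longleftrightarrow> b = 0) \<and> (a = 1 \<longleftrightarrow> b = 1)"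
  unfolding min_def by presburger

lemma count_list_replicate: "count_list (replicate n y) x = (if x = y then n else 0)"
  by (induction n) auto

lemma min2_count_list_eq_if_gamma:
  assumes "gamma u v"
  shows "min 2 (count_list u x) = min 2 (count_list v x)"
proof -
  have "count_list u x = 0 \<longleftrightarrow> count_list v x = 0"
    using set_eq_if_gamma[OF assms] by (simp add: count_list_0_iff)
  moreover have "count_list u x = 1 \<longleftrightarrow> count_list v x = 1"
    using assms unfolding gamma_def simple_letters_def by blast
  ultimately show ?thesis
    by (simp add: min2_eq_iff)
qed

text \<open>The words \<open>x\<^sup>ay\<^sup>b\<close>; their \<open>\<gamma>\<close>-classes are the nonzero elements of \<open>M\<^sub>\<gamma>(xx\<^sup>+yy\<^sup>+)\<close>.\<close>

definition xy_word :: "word \<Rightarrow> bool" where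
  "xy_word w \<longleftrightarrow> set w \<subseteq> {0, 1} \<and> sorted w"

definition xy_type :: "word \<Rightarrow> nat \<times> nat" where
  "xy_type w = (min 2 (count_list w 0), min 2 (count_list w 1))"

lemma xy_type_eq_if_gamma: "gamma u v \<Longrightarrow> xy_type u = xy_type v"
  by (simp add: xy_type_def min2_count_list_eq_if_gamma)

lemma xy_word_if_gamma:
  assumes "gamma u v" "xy_word u"
  shows "xy_word v"
proof -
  obtain xs es fs where "length es = length xs" "length fs = length xs"
    "\<forall>e\<in>set es. 1 \<le> e" "\<forall>f\<in>set fs. 1 \<le> f" "u = blocks es xs" "v = blocks fs xs"
    using assms(1) by (rule gamma_blocksE)
  then have "sorted v = sorted u"
    by (simp add: sorted_blocks)
  then show ?thesis
    using assms set_eq_if_gamma[OF assms(1)] by (simp add: xy_word_def)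
qed

lemma xy_word_eq_replicate:
  "xy_word w \<Longrightarrow> w = replicate (count_list w 0) 0 @ replicate (count_list w 1) 1"
proof (induction w)
  case Nil
  then show ?case by simp
next
  case (Cons a w)
  then have "xy_word w" and a: "a = 0 \<or> a = 1"
    by (auto simp: xy_word_def)
  show ?case
  proof (cases "a = 0")
    case True
    then show ?thesis using Cons.IH[OF \<open>xy_word w\<close>] by simp
  next
    case False
    with a Cons.prems have "a = 1" "0 \<notin> set w"
      by (auto simp: xy_word_def)
    then show ?thesis
      using Cons.IH[OF \<open>xy_word w\<close>] by (simp add: count_list_0_iff)
  qed
qed

lemma xy_word_eq_blocks:
  assumes "xy_word w"
  shows "w = blocks (map (count_list w) [k \<leftarrow> [0, 1]. k \<in> set w]) [k \<leftarrow> [0, 1]. k \<in> set w]"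
proof -
  obtain a b where "w = replicate a 0 @ replicate b 1"
    using xy_word_eq_replicate[OF assms] by blast
  then show ?thesis
    by (cases "a = 0"; cases "b = 0") (simp_all add: blocks_def count_list_replicate)
qed

lemma gamma_if_xy_type_eq:
  assumes "xy_word u" "xy_word v" "xy_type u = xy_type v"
  shows "gamma u v"
proof -
  have min2: "min 2 (count_list u k) = min 2 (count_list v k)" for k
  proof -
    consider "k = 0" | "k = 1" | "k \<notin> set u" "k \<notin> set v"
      using assms(1,2) unfolding xy_word_def by blast
    then show ?thesis
      using assms(3) by cases (simp_all add: xy_type_def count_list_0_iff)
  qed
  then have zero_iff: "count_list u k = 0 \<longleftrightarrow> count_list v k = 0"
    and one_iff: "count_list u k = 1 \<longleftrightarrow> count_list v k = 1" for k
    by (simp_all add: min2_eq_iff)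
  have "set u = set v"
  proof (rule set_eqI)
    show "k \<in> set u \<longleftrightarrow> k \<in> set v" for k
      using zero_iff[of k] by (simp add: count_list_0_iff)
  qed
  have "simple_letters u = simple_letters v"
    unfolding simple_letters_def using one_iff by blast
  define xs where "xs = [k \<leftarrow> [0, 1]. k \<in> set u]"
  have "u = blocks (map (count_list u) xs) xs"
    unfolding xs_def by (rule xy_word_eq_blocks[OF assms(1)])
  moreover have "v = blocks (map (count_list v) xs) xs"
    unfolding xs_def \<open>set u = set v\<close> by (rule xy_word_eq_blocks[OF assms(2)])
  moreover have "\<forall>e\<in>set (map (count_list w) xs). 1 \<le> e" if "set w = set u" for w
    using that count_list_0_iff[of w] by (auto simp: xs_def Suc_le_eq)
  ultimately show ?thesis
    using \<open>simple_letters u = simple_letters v\<close> \<open>set u = set v\<close>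
    unfolding gamma_iff_blocks by (metis length_map)
qed

lemma gclass_xy_word:
  assumes "xy_word u"
  shows "gclass u = {v. xy_word v \<and> xy_type v = xy_type u}"
proof (intro set_eqI iffI)
  fix v
  assume "v \<in> gclass u"
  then have "gamma u v"
    by (simp add: gclass_def)
  then show "v \<in> {v. xy_word v \<and> xy_type v = xy_type u}"
    using assms xy_word_if_gamma xy_type_eq_if_gamma by simp
next
  fix v
  assume "v \<in> {v. xy_word v \<and> xy_type v = xy_type u}"
  then show "v \<in> gclass u"
    using gamma_if_xy_type_eq[OF assms] by (simp add: gclass_def)
qed

lemma xy_word_append_iff: "xy_word (u @ v) \<longleftrightarrow> xy_word u \<and> xy_word v \<and> (1 \<notin> set u \<or> 0 \<notin> set v)"
proof (cases "set u \<subseteq> {0, 1} \<and> set v \<subseteq> {0, 1}")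
  case True
  then have "(\<forall>a\<in>set u. \<forall>b\<in>set v. a \<le> b) \<longleftrightarrow> 1 \<notin> set u \<or> 0 \<notin> set v"
    by fastforce
  then show ?thesis
    using True by (auto simp: xy_word_def sorted_append)
qed (auto simp: xy_word_def)

lemma gle_xxyy_iff: "gle w [0, 0, 1, 1] \<longleftrightarrow> xy_word w"
proof
  assume "gle w [0, 0, 1, 1]"
  then obtain p s where "gclass [0, 0, 1, 1] = gclass (p @ w @ s)"
    unfolding gle_def by blast
  then have "p @ w @ s \<in> gclass [0, 0, 1, 1]"
    by (simp add: gclass_def gamma_refl)
  then have "xy_word (p @ w @ s)"
    by (simp add: gclass_xy_word xy_word_def)
  then show "xy_word w"
    by (simp add: xy_word_append_iff)
next
  assume "xy_word w"
  then have "xy_word ([0, 0] @ w @ [1, 1])"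
    unfolding xy_word_append_iff by (simp add: xy_word_def)
  moreover have "xy_type ([0, 0] @ w @ [1, 1]) = xy_type [0, 0, 1, 1]"
    by (simp add: xy_type_def)
  ultimately have "gclass [0, 0, 1, 1] = gclass ([0, 0] @ w @ [1, 1])"
    by (simp add: gclass_xy_word xy_word_def)
  then show "gle w [0, 0, 1, 1]"
    unfolding gle_def by blast
qed

lemma M_gamma_xxyy_simps:
  "fst M_gamma_xxyy = insert None (Some ` {gclass w | w. xy_word w})"
  "one_of M_gamma_xxyy = Some (gclass [])"
  "mult_of M_gamma_xxyy None a = None"
  "mult_of M_gamma_xxyy a None = None"
  unfolding M_gamma_xxyy_def M_gamma_def mult_of_def one_of_def
  \<comment> \<open>\<open>One_nat_def\<close> would rewrite \<open>[0, 0, 1, 1]\<close> before \<open>gle_xxyy_iff\<close> can match it\<close>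
  by (simp_all add: gle_xxyy_iff del: One_nat_def split: option.splits)

lemma some_in_gclass: "(SOME v. v \<in> gclass u) \<in> gclass u"
  by (rule someI[of _ u]) (simp add: gclass_def gamma_refl)

lemma xy_type_append:
  "xy_type (u @ v) = (min 2 (fst (xy_type u) + fst (xy_type v)), min 2 (snd (xy_type u) + snd (xy_type v)))"
  by (simp add: xy_type_def min_def)

lemma xy_type_eq_0_iff: "fst (xy_type w) = 0 \<longleftrightarrow> 0 \<notin> set w" "snd (xy_type w) = 0 \<longleftrightarrow> 1 \<notin> set w"
  unfolding xy_type_def count_list_0_iff[symmetric] by (simp_all add: min_def del: One_nat_def)

lemma xy_word_append_iff_xy_type:
  "xy_word u \<Longrightarrow> xy_word v \<Longrightarrow> xy_word (u @ v) \<longleftrightarrow> snd (xy_type u) = 0 \<or> fst (xy_type v) = 0"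
  by (simp add: xy_word_append_iff xy_type_eq_0_iff)

lemma mult_of_M_gamma_xxyy:
  assumes "xy_word u" "xy_word v"
  shows "mult_of M_gamma_xxyy (Some (gclass u)) (Some (gclass v)) =
    (if xy_word (u @ v) then Some (gclass (u @ v)) else None)"
proof -
  define x y where "x = (SOME x. x \<in> gclass u)" and "y = (SOME y. y \<in> gclass v)"
  have x: "xy_word x" "xy_type x = xy_type u"
    using some_in_gclass[of u] gclass_xy_word[OF assms(1)] by (simp_all add: x_def)
  have y: "xy_word y" "xy_type y = xy_type v"
    using some_in_gclass[of v] gclass_xy_word[OF assms(2)] by (simp_all add: y_def)
  have "mult_of M_gamma_xxyy (Some (gclass u)) (Some (gclass v)) =
      (if gle (x @ y) [0, 0, 1, 1] then Some (gclass (x @ y)) else None)"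
    by (simp add: M_gamma_xxyy_def M_gamma_def mult_of_def x_def y_def Let_def)
  moreover have "xy_word (x @ y) \<longleftrightarrow> xy_word (u @ v)"
    using x y assms by (simp add: xy_word_append_iff_xy_type)
  moreover have "xy_type (x @ y) = xy_type (u @ v)"
    using x y by (simp add: xy_type_append)
  ultimately show ?thesis
    by (simp add: gle_xxyy_iff gclass_xy_word del: One_nat_def)
qed

definition class_type :: "word set option \<Rightarrow> (nat \<times> nat) option" where
  "class_type = map_option (\<lambda>A. xy_type (SOME w. w \<in> A))"

lemma class_type_None: "class_type None = None"
  by (simp add: class_type_def)

lemma class_type_gclass: "xy_word u \<Longrightarrow> class_type (Some (gclass u)) = Some (xy_type u)"
  using some_in_gclass[of u] by (simp add: class_type_def gclass_xy_word)

lemma class_type_mult: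
  assumes "a \<in> fst M_gamma_xxyy" "b \<in> fst M_gamma_xxyy"
  shows "class_type (mult_of M_gamma_xxyy a b) = mult_of M_xy_trunc (class_type a) (class_type b)"
proof (cases "a = None \<or> b = None")
  case True
  then show ?thesis
    by (auto simp: M_gamma_xxyy_simps M_xy_trunc_simps class_type_def split: option.splits)
next
  case False
  then obtain u v where "a = Some (gclass u)" "xy_word u" "b = Some (gclass v)" "xy_word v"
    using assms by (auto simp: M_gamma_xxyy_simps)
  then show ?thesis
    by (cases "xy_type u", cases "xy_type v")
      (simp add: mult_of_M_gamma_xxyy class_type_gclass class_type_None M_xy_trunc_simps
        xy_type_append xy_word_append_iff_xy_type)
qed

lemma class_type_onto: "b \<in> fst M_xy_trunc \<Longrightarrow> \<exists>a\<in>fst M_gamma_xxyy. class_type a = b"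
proof (cases b)
  case None
  then show ?thesis
    by (simp add: M_gamma_xxyy_simps class_type_def)
next
  case (Some p)
  moreover assume "b \<in> fst M_xy_trunc"
  ultimately obtain i j where ij: "b = Some (i, j)" "i \<le> 2" "j \<le> 2"
    by (auto simp: M_xy_trunc_simps)
  define w where "w = replicate i 0 @ replicate j (1 :: nat)"
  have "xy_word w"
    by (auto simp: w_def xy_word_def sorted_append)
  moreover have "xy_type w = (i, j)"
    using ij by (simp add: w_def xy_type_def count_list_replicate)
  ultimately show ?thesis
    using ij class_type_gclass[of w] by (auto simp: M_gamma_xxyy_simps)
qed

lemma sat_M_xy_trunc_if_sat_M_gamma_xxyy: "sat M_gamma_xxyy u v \<Longrightarrow> sat M_xy_trunc u v"
proof (rule sat_hom_image[where M = M_gamma_xxyy and h = class_type])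
  have "xy_word []"
    by (simp add: xy_word_def)
  then show "one_of M_gamma_xxyy \<in> fst M_gamma_xxyy"
    unfolding M_gamma_xxyy_simps by blast
  show "\<forall>a\<in>fst M_gamma_xxyy. \<forall>b\<in>fst M_gamma_xxyy. mult_of M_gamma_xxyy a b \<in> fst M_gamma_xxyy"
    by (auto simp: M_gamma_xxyy_simps mult_of_M_gamma_xxyy) blast
  show "\<forall>a\<in>fst M_gamma_xxyy. \<forall>b\<in>fst M_gamma_xxyy.
      class_type (mult_of M_gamma_xxyy a b) = mult_of M_xy_trunc (class_type a) (class_type b)"
    by (simp add: class_type_mult)
  show "class_type (one_of M_gamma_xxyy) = one_of M_xy_trunc"
    by (simp add: M_gamma_xxyy_simps M_xy_trunc_simps class_type_gclass xy_word_def xy_type_def)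
  show "\<forall>b\<in>fst M_xy_trunc. \<exists>a\<in>fst M_gamma_xxyy. class_type a = b"
    by (simp add: class_type_onto)
qed

section \<open>A monoid separating the two sides of the modular law\<close>

text \<open>
  The submonoid of \<open>M(xyx) \<times> M_xy_trunc\<close> generated by \<open>(x, x\<^sup>2)\<close>, \<open>(y, 1)\<close> and \<open>(1, y\<^sup>2)\<close>,
  with zero.
\<close>

definition N_carrier :: "(word option \<times> (nat \<times> nat) option) set" where
  "N_carrier = {(None, None),
    (Some [], Some (0, 0)), (Some [], Some (0, 2)),
    (Some [0], Some (2, 0)), (Some [0], Some (2, 2)),
    (Some [1], Some (0, 0)), (Some [1], Some (0, 2)),
    (Some [0, 1], Some (2, 0)), (Some [0, 1], Some (2, 2)),
    (Some [1, 0], Some (2, 0)), (Some [1, 0], Some (2, 2)),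
    (Some [0, 1, 0], Some (2, 0)), (Some [0, 1, 0], Some (2, 2))}"

definition N_sep :: "(word option \<times> (nat \<times> nat) option) monoid_str" where
  "N_sep = zero_prod M_xyx M_xy_trunc N_carrier"

lemma is_monoid_N_sep: "is_monoid N_sep"
  unfolding N_sep_def
proof (rule is_monoid_zero_prod[OF None_is_zero_M_xyx None_is_zero_M_xy_trunc is_monoid_M_xyx is_monoid_M_xy_trunc])
  show "N_carrier \<subseteq> fst M_xyx \<times> fst M_xy_trunc"
    unfolding N_carrier_def M_xyx_simps M_xy_trunc_simps by simp
  show "(one_of M_xyx, one_of M_xy_trunc) \<in> N_carrier"
    unfolding N_carrier_def M_xyx_simps M_xy_trunc_simps by simp
  show "\<forall>a\<in>N_carrier. \<forall>b\<in>N_carrier.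
      zero_collapse (mult_of M_xyx (fst a) (fst b), mult_of M_xy_trunc (snd a) (snd b)) \<in> N_carrier"
    unfolding N_carrier_def M_xyx_simps M_xy_trunc_simps by (simp add: zero_collapse_simps)
  show "\<forall>a\<in>N_carrier. zero_collapse a = a"
    unfolding N_carrier_def by (simp add: zero_collapse_simps)
qed

lemma sat_N_sep: "sat M_xyx u v \<Longrightarrow> sat M_xy_trunc u v \<Longrightarrow> sat N_sep u v"
  unfolding N_sep_def
  by (rule sat_zero_prod[OF None_is_zero_M_xyx None_is_zero_M_xy_trunc])
    (simp_all add: M_xyx_simps M_xy_trunc_simps N_carrier_def)

lemma eval_word_N_sep:
  "eval_word N_sep \<phi> w = zero_collapse (eval_word M_xyx (fst \<circ> \<phi>) w, eval_word M_xy_trunc (snd \<circ> \<phi>) w)"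
  unfolding N_sep_def
  by (rule eval_word_zero_prod[OF None_is_zero_M_xyx None_is_zero_M_xy_trunc])
    (simp_all add: M_xyx_simps M_xy_trunc_simps)

lemma sat_M_xyx_xyxzz_xyzxz: "sat M_xyx [0, 1, 0, 2, 2] [0, 1, 2, 0, 2]"
  by (rule sat_three_letters) (simp_all add: M_xyx_simps)

lemma sat_M_xyx_xxy_xxyx: "sat M_xyx [0, 0, 1] [0, 0, 1, 0]"
  by (rule sat_two_letters) (simp_all add: M_xyx_simps)

lemma sat_N_sep_xxy_xxyx: "sat N_sep [0, 0, 1] [0, 0, 1, 0]"
  by (rule sat_two_letters) (unfold eval_word_N_sep,
    simp_all add: N_sep_def zero_prod_simps N_carrier_def M_xyx_simps M_xy_trunc_simps zero_collapse_simps)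

lemma sat_M_xy_trunc_xyxzz_xyxxzz: "sat M_xy_trunc [0, 1, 0, 2, 2] [0, 1, 0, 0, 2, 2]"
  by (rule sat_three_letters) (simp_all add: M_xy_trunc_simps)

lemma sat_M_xy_trunc_xyxxzzx_xyzxz: "sat M_xy_trunc [0, 1, 0, 0, 2, 2, 0] [0, 1, 2, 0, 2]"
  by (rule sat_three_letters) (simp_all add: M_xy_trunc_simps)

lemma not_sat_N_sep_xyxzz_xyzxz: "\<not> sat N_sep [0, 1, 0, 2, 2] [0, 1, 2, 0, 2]"
proof
  define \<phi> :: "nat \<Rightarrow> word option \<times> (nat \<times> nat) option" where
    "\<phi> i = (if i = 0 then (Some [0], Some (2, 0)) else if i = 1 then (Some [1], Some (0, 0))
      else (Some [], Some (0, 2)))" for i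
  assume "sat N_sep [0, 1, 0, 2, 2] [0, 1, 2, 0, 2]"
  moreover have "\<forall>i. \<phi> i \<in> fst N_sep"
    by (simp add: \<phi>_def N_sep_def zero_prod_simps N_carrier_def)
  ultimately have "eval_word N_sep \<phi> [0, 1, 0, 2, 2] = eval_word N_sep \<phi> [0, 1, 2, 0, 2]"
    unfolding sat_def by blast
  then show False
    unfolding eval_word_N_sep by (simp add: \<phi>_def M_xyx_simps M_xy_trunc_simps zero_collapse_simps)
qed

text \<open>
  With \<open>x, y, z\<close> the letters \<open>0, 1, 2\<close>: \<open>xyxz\<^sup>2 \<approx> xyx\<^sup>2z\<^sup>2 \<approx> xyx\<^sup>2z\<^sup>2x \<approx> xyzxz\<close>, the middle step
  being \<open>x\<^sup>2y \<approx> x\<^sup>2yx\<close> with \<open>y \<mapsto> z\<^sup>2\<close> in the context \<open>xy \<cdot> _\<close>.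
\<close>

lemma derive_xyxzz_xyzxz:
  assumes T: "eq_theory T"
    and "([0, 1, 0, 2, 2], [0, 1, 0, 0, 2, 2]) \<in> T" "([0, 0, 1], [0, 0, 1, 0]) \<in> T"
      "([0, 1, 0, 0, 2, 2, 0], [0, 1, 2, 0, 2]) \<in> T"
  shows "([0, 1, 0, 2, 2], [0, 1, 2, 0, 2]) \<in> T"
proof -
  define \<sigma> :: "nat \<Rightarrow> word" where "\<sigma> i = (if i = 1 then [2, 2] else [i])" for i
  have "(subst \<sigma> [0, 0, 1], subst \<sigma> [0, 0, 1, 0]) \<in> T"
    using T assms(3) by (rule eq_theory_subst)
  then have "([0, 1] @ [0, 0, 2, 2] @ [], [0, 1] @ [0, 0, 2, 2, 0] @ []) \<in> T"
    using T by (intro eq_theory_context) (simp_all add: subst_def \<sigma>_def)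
  then show ?thesis
    using T assms(2,4) by (simp add: eq_theory_trans)
qed

theorem proposition5p1:
  shows "\<not> modular_on (subvarieties Id_join) var_le"
proof -
  let ?A = "identities M_xyx" and ?B = "identities M_xy_trunc" and ?N = "identities N_sep"
  have A: "?A \<in> subvarieties Id_join"
    by (rule identities_in_subvarieties) (simp_all add: is_monoid_M_xyx Id_join_def)
  have B: "?B \<in> subvarieties Id_join"
    using sat_M_xy_trunc_if_sat_M_gamma_xxyy
    by (intro identities_in_subvarieties is_monoid_M_xy_trunc) (auto simp: Id_join_def identities_def)
  have AB_N: "?A \<inter> ?B \<subseteq> ?N"
    using sat_N_sep by (auto simp: identities_def)
  with A B have N: "?N \<in> subvarieties Id_join"
    by (intro identities_in_subvarieties is_monoid_N_sep) (auto simp: subvarieties_def)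
  have C: "?A \<inter> ?N \<in> subvarieties Id_join"
    using is_lub_in_subvarieties[OF A N] by (simp add: is_lub_in_def)
  show ?thesis
  proof (rule not_modular_on_subvarieties[OF A B C])
    show "?A \<inter> ?N \<subseteq> ?A"
      by blast
    show "([0, 1, 0, 2, 2], [0, 1, 2, 0, 2]) \<in> ?A"
      using sat_M_xyx_xyxzz_xyzxz by (simp add: identities_def)
    show "([0, 1, 0, 2, 2], [0, 1, 2, 0, 2]) \<in> eq_closure (?B \<union> ?A \<inter> ?N)"
      using eq_closure_upper[of "?B \<union> ?A \<inter> ?N"] sat_M_xy_trunc_xyxzz_xyxxzz sat_M_xy_trunc_xyxxzzx_xyzxz
        sat_M_xyx_xxy_xxyx sat_N_sep_xxy_xxyx
      by (intro derive_xyxzz_xyzxz eq_theory_eq_closure) (auto simp: identities_def)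
    have "eq_closure (?A \<inter> ?B \<union> ?A \<inter> ?N) \<subseteq> ?N"
      using AB_N N by (intro eq_closure_least) (auto simp: subvarieties_def)
    then show "([0, 1, 0, 2, 2], [0, 1, 2, 0, 2]) \<notin> eq_closure (?A \<inter> ?B \<union> ?A \<inter> ?N)"
      using not_sat_N_sep_xyxzz_xyzxz by (auto simp: identities_def)
  qed
qed

end
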